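(* Let $(\widehat x_1,\widehat y_1),\dots,(\widehat x_N,\widehat y_N)$ be data with pairwise distinct $\widehat x_i$ (so $C=N$ and each $N_c=1$), and let $\rho_c=0$ for all $c=1,\dots,N$ and $\varepsilon\ge0$. Let $\widehat{\mathbb P}$ be the nominal distribution with $\widehat p_c=1/N$ and $\widehat\theta_c=(\nabla\Psi)^{-1}(T(\widehat y_c))\in\Theta$ for all $c$. Then the distributionally robust estimation problem $\min_{w\in\mathcal W}\sup_{\mathbb Q\in\mathbb B(\widehat{\mathbb P})}\mathbb E_{\mathbb Q}[\ell_\lambda(X,Y,w)]$ is equivalent to \[\min_{w\in\mathcal W}\ \sup_{\mathbb Q:\ \mathrm{KL}(\mathbb Q\|\widehat{\mathbb P}^{\mathrm{emp}})\le\varepsilon}\mathbb E_{\mathbb Q}[\ell_\lambda(X,Y,w)],\] where $\widehat{\mathbb P}^{\mathrm{emp}}=N^{-1}\sum_{i=1}^N\delta_{(\widehat x_i,\widehat y_i)}$.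
   Context: Exponential family: $\nu$ a measure on $\mathcal Y\subseteq\mathbb R^m$, $h\ge0$, $T:\mathcal Y\to\mathbb R^p$; $f(y|\theta)=h(y)\exp(\langle\theta,T(y)\rangle-\Psi(\theta))$ density w.r.t. $\nu$; $\Theta=\{\theta\in\mathbb R^p:\int he^{\langle\theta,T\rangle}d\nu<\infty\}$, $\Psi(\theta)=\log\int he^{\langle\theta,T\rangle}d\nu$; regular family ($\Theta$ open, $T_i$ affinely independent), so $\nabla\Psi$ is injective on $\Theta$. $\mathcal X\subseteq\mathbb R^n$, $\mathcal W$ finite-dimensional, $\lambda:\mathcal W\times\mathcal X\to\Theta$ jointly continuous; $\ell_\lambda(x,y,w)=\Psi(\lambda(w,x))-\langle T(y),\lambda(w,x)\rangle$. Nominal distribution $\widehat{\mathbb P}$: marginal $\sum_c\widehat p_c\delta_{\widehat x_c}$, conditional at $\widehat x_c$ with density $f(\cdot|\widehat\theta_c)$. KL divergence $\mathrm{KL}(\mathbb P_1\|\mathbb P_2)=\mathbb E_{\mathbb P_1}[\log d\mathbb P_1/d\mathbb P_2]$ if $\mathbb P_1\ll\mathbb P_2$, else $+\infty$. Ambiguity set $\mathbb B(\widehat{\mathbb P})$ (radii $\varepsilon\ge0$, $\rho\in\mathbb R_+^C$): all probability measures $\mathbb Q$ on $\mathcal X\times\mathcal Y$ for which there exist a probability measure $\mathbb Q_X$ on $\mathcal X$ and $\theta_c\in\Theta$ such that, with $\mathbb Q_{Y|\widehat x_c}$ having density $f(\cdot|\theta_c)$: $\mathbb Q(\{\widehat x_c\}\times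 A)=\mathbb Q_X(\{\widehat x_c\})\mathbb Q_{Y|\widehat x_c}(A)$ for all $c$ and measurable $A$; $\mathrm{KL}(\mathbb Q_{Y|\widehat x_c}\|\widehat{\mathbb P}_{Y|\widehat x_c})\le\rho_c$; $\mathrm{KL}(\mathbb Q_X\|\widehat{\mathbb P}_X)+\sum_c\rho_c\mathbb Q_X(\{\widehat x_c\})\le\varepsilon$. *)

theory Defs
  imports "HOL-Analysis.Analysis" "HOL-Probability.Probability"
begin

text \<open>The expectation is split into positive and negative
parts so that it is always defined as an extended real.\<close>

definition KL :: "'a measure \<Rightarrow> 'a measure \<Rightarrow> ereal" where
  "KL P1 P2 =
     (if sets P1 = sets P2 \<and> absolutely_continuous P2 P1 then
        enn2ereal (\<integral>\<^sup>+ z. ennreal (ln (enn2real (RN_deriv P2 P1 z))) \<partial>P1)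
        - enn2ereal (\<integral>\<^sup>+ z. ennreal (- ln (enn2real (RN_deriv P2 P1 z))) \<partial>P1)
      else \<infinity>)"

definition Theta :: "'y measure \<Rightarrow> ('y \<Rightarrow> real) \<Rightarrow> ('y \<Rightarrow> 'p::real_inner) \<Rightarrow> 'p set" where
  "Theta nu h T = {\<theta>. (\<integral>\<^sup>+ y. ennreal (h y * exp (\<theta> \<bullet> T y)) \<partial>nu) < \<infinity>}"

definition Psi :: "'y measure \<Rightarrow> ('y \<Rightarrow> real) \<Rightarrow> ('y \<Rightarrow> 'p::real_inner) \<Rightarrow> 'p \<Rightarrow> real" where
  "Psi nu h T \<theta> = ln (enn2real (\<integral>\<^sup>+ y. ennreal (h y * exp (\<theta> \<bullet> T y)) \<partial>nu))"

definition expfam_density ::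
  "'y measure \<Rightarrow> ('y \<Rightarrow> real) \<Rightarrow> ('y \<Rightarrow> 'p::real_inner) \<Rightarrow> 'p \<Rightarrow> 'y \<Rightarrow> real" where
  "expfam_density nu h T \<theta> y = h y * exp (\<theta> \<bullet> T y - Psi nu h T \<theta>)"

text \<open>Regular family: Theta open and the statistics T_1,...,T_p affinely independent, i.e.
no nontrivial affine relation a.T = c holds (h nu)-almost everywhere.\<close>

definition regular_expfam :: "'y measure \<Rightarrow> ('y \<Rightarrow> real) \<Rightarrow> ('y \<Rightarrow> 'p::real_inner) \<Rightarrow> bool" where
  "regular_expfam nu h T \<longleftrightarrow> open (Theta nu h T) \<and>
     (\<forall>a c. (AE y in nu. h y \<noteq> 0 \<longrightarrow> a \<bullet> T y = c) \<longrightarrow> a = 0 \<and> c = 0)"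

definition ell_loss ::
  "'y measure \<Rightarrow> ('y \<Rightarrow> real) \<Rightarrow> ('y \<Rightarrow> 'p::real_inner) \<Rightarrow> ('w \<Rightarrow> 'x \<Rightarrow> 'p)
     \<Rightarrow> 'x \<Rightarrow> 'y \<Rightarrow> 'w \<Rightarrow> real" where
  "ell_loss nu h T lam x y w = Psi nu h T (lam w x) - T y \<bullet> lam w x"

text \<open>MX, MY: measurable spaces on the covariate and response sets (sets MY = sets nu);
xh c (c < C): support points of the nominal marginal PX; th c: nominal conditional parameters;
rho, eps: radii.\<close>

definition amb_set ::
  "'x measure \<Rightarrow> 'y measure \<Rightarrow> 'y measure \<Rightarrow> ('y \<Rightarrow> real) \<Rightarrow> ('y \<Rightarrow> 'p::real_inner)
     \<Rightarrow> nat \<Rightarrow> (nat \<Rightarrow> 'x) \<Rightarrow> 'x measure \<Rightarrow> (nat \<Rightarrow> 'p) \<Rightarrow> (nat \<Rightarrow> real) \<Rightarrow> real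
     \<Rightarrow> ('x \<times> 'y) measure set" where
  "amb_set MX MY nu h T C xh PX th rho eps =
    {Q. prob_space Q \<and> sets Q = sets (MX \<Otimes>\<^sub>M MY) \<and>
      (\<exists>QX \<theta>. prob_space QX \<and> sets QX = sets MX \<and>
         (\<forall>c<C. \<theta> c \<in> Theta nu h T) \<and>
         (\<forall>c<C. \<forall>A\<in>sets MY.
            emeasure Q ({xh c} \<times> A)
              = emeasure QX {xh c} * emeasure (density nu (\<lambda>y. ennreal (expfam_density nu h T (\<theta> c) y))) A) \<and>
         (\<forall>c<C. KL (density nu (\<lambda>y. ennreal (expfam_density nu h T (\<theta> c) y)))
                    (density nu (\<lambda>y. ennreal (expfam_density nu h T (th c) y))) \<le> ereal (rho c)) \<and>
         KL QX PX + ereal (\<Sum>c<C. rho c * measure QX {xh c}) \<le> ereal eps)}"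

end

(*
  With all conditional radii 0, Gibbs' inequality (KL(P1 || P2) <= 0 implies P1 = P2) forces every
  conditional of a measure in the ambiguity set to be the nominal f(. | th c); such a measure is
  therefore sum_c q c * (delta (xh c) x f(. | th c)) with weights satisfying KL(q || uniform) <= eps.
  A measure within KL-distance eps of the empirical measure is absolutely continuous with respect
  to it, hence equal to sum_c q c * delta (xh c, yh c) under the same constraint on q.
  Since grad Psi (th c) = T (yh c), the mean of T under f(. | th c) is T (yh c) (Jensen's inequality
  for the exponential tilts makes t |-> Psi (th c + t v) - t E[T . v] minimal at t = 0), and the
  loss is affine in T y; so both kinds of measures have expected loss sum_c q c * loss (xh c, yh c),
  and the two suprema are taken over the same set of values.
*)

theory Submission
  imports Defs
begin

section \<open>Discrete measures and slices\<close>

lemma image_eq_imageI: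
  assumes "\<And>x. x \<in> A \<Longrightarrow> \<exists>y\<in>B. f x = g y" and "\<And>y. y \<in> B \<Longrightarrow> \<exists>x\<in>A. g y = f x"
  shows "f ` A = g ` B"
proof
  show "f ` A \<subseteq> g ` B" using assms(1) by (auto simp: image_iff)
  show "g ` B \<subseteq> f ` A" using assms(2) by (auto simp: image_iff)
qed

lemma nn_integral_finite_support:
  assumes "finite S" and "AE z in M. z \<in> S" and "\<And>s. s \<in> S \<Longrightarrow> {s} \<in> sets M"
  shows "(\<integral>\<^sup>+z. f z \<partial>M) = (\<Sum>s\<in>S. f s * emeasure M {s})"
proof -
  have "(\<integral>\<^sup>+z. f z \<partial>M) = (\<integral>\<^sup>+z. f z * indicator S z \<partial>M)"
    by (rule nn_integral_cong_AE) (use assms(2) in \<open>eventually_elim, simp\<close>)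
  also have "\<dots> = (\<Sum>s\<in>S. f s * emeasure M {s})"
    by (rule nn_integral_indicator_finite) (use assms in auto)
  finally show ?thesis .
qed

lemma (in finite_measure) integral_finite_support:
  fixes f :: "'a \<Rightarrow> real"
  assumes "finite S" and "AE z in M. z \<in> S" and "\<And>s. s \<in> S \<Longrightarrow> {s} \<in> sets M"
    and "f \<in> borel_measurable M"
  shows "(\<integral>z. f z \<partial>M) = (\<Sum>s\<in>S. f s * measure M {s})"
proof -
  have "S \<in> sets M" by (rule sets.countable) (use assms in \<open>auto intro: countable_finite\<close>)
  then have "(\<integral>z. f z \<partial>M) = (\<integral>z. f z * indicator S z \<partial>M)"
    using assms(2,4) by (intro integral_cong_AE) (auto elim!: eventually_mono)
  also have "\<dots> = (\<Sum>s\<in>S. f s * measure M {s})"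
    using assms(1,3) by (intro integral_indicator_finite_real) (auto simp: less_top[symmetric])
  finally show ?thesis .
qed

lemma sum_measure_singletons_eq_1:
  assumes "prob_space Q" and "finite I" and sing: "\<And>i. i \<in> I \<Longrightarrow> {g i} \<in> sets Q"
    and inj: "inj_on g I" and conc: "emeasure Q (space Q - g ` I) = 0"
  shows "(\<Sum>i\<in>I. measure Q {g i}) = 1"
proof -
  interpret prob_space Q by fact
  have S: "g ` I \<in> sets Q"
    by (rule sets.countable) (use sing \<open>finite I\<close> in \<open>auto intro: countable_finite\<close>)
  have "(\<Sum>i\<in>I. measure Q {g i}) = measure Q (\<Union>i\<in>I. {g i})"
    using sing inj \<open>finite I\<close>
    by (intro finite_measure_finite_Union[symmetric]) (auto simp: disjoint_family_on_def inj_on_def)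
  also have "\<dots> = measure Q (g ` I)" by (simp add: UNION_singleton_eq_range)
  also have "\<dots> = 1"
    using prob_compl[OF S] conc by (simp add: emeasure_eq_measure)
  finally show ?thesis .
qed

lemma
  fixes p :: "'i pmf"
  assumes sp: "set_pmf p \<subseteq> I" and gK: "\<And>i. i \<in> I \<Longrightarrow> g i \<in> space K"
  shows prob_space_distr_pmf: "prob_space (distr p K g)"
    and emeasure_distr_pmf: "A \<in> sets K \<Longrightarrow> emeasure (distr p K g) A = emeasure p {i\<in>I. g i \<in> A}"
proof -
  obtain i0 where "i0 \<in> set_pmf p" using set_pmf_not_empty[of p] by blast
  define g' where "g' i = (if i \<in> I then g i else g i0)" for i
  have g': "g' \<in> measurable p K" using gK sp \<open>i0 \<in> set_pmf p\<close> by (auto simp: g'_def)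
  have pre: "emeasure p (g -` A \<inter> space p) = emeasure p {i\<in>I. g' i \<in> A}"
    and pre': "emeasure p (g' -` A \<inter> space p) = emeasure p {i\<in>I. g' i \<in> A}" for A
    by (subst (1 2) emeasure_Int_set_pmf[symmetric], rule arg_cong[where f="emeasure p"],
        use sp in \<open>auto simp: g'_def\<close>)+
  have eq: "distr p K g = distr p K g'" unfolding distr_def pre pre' ..
  show "prob_space (distr p K g)" unfolding eq by (rule measure_pmf.prob_space_distr[OF g'])
  assume "A \<in> sets K"
  then have "emeasure (distr p K g) A = emeasure p (g' -` A \<inter> space p)"
    unfolding eq by (rule emeasure_distr[OF g'])
  also have "\<dots> = emeasure p {i\<in>I. g i \<in> A}"
    unfolding pre' by (rule arg_cong[where f="emeasure p"]) (auto simp: g'_def)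
  finally show "emeasure (distr p K g) A = emeasure p {i\<in>I. g i \<in> A}" .
qed

lemma measure_distr_pmf_singleton:
  fixes p :: "'i pmf"
  assumes "set_pmf p \<subseteq> I" and "\<And>i. i \<in> I \<Longrightarrow> g i \<in> space K"
    and "inj_on g I" and "c \<in> I" and "{g c} \<in> sets K"
  shows "measure (distr p K g) {g c} = pmf p c"
proof -
  have "{i\<in>I. g i \<in> {g c}} = {c}" using assms(3,4) by (auto simp: inj_on_def)
  then have "emeasure (distr p K g) {g c} = emeasure p {c}"
    using emeasure_distr_pmf[of p I g K, OF assms(1,2,5)] by simp
  then show ?thesis by (simp add: measure_def emeasure_pmf_single)
qed

lemma emeasure_distr_pmf_outside_image:
  fixes p :: "'i pmf"
  assumes "set_pmf p \<subseteq> I" and "\<And>i. i \<in> I \<Longrightarrow> g i \<in> space K"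
    and "space K - g ` I \<in> sets K"
  shows "emeasure (distr p K g) (space K - g ` I) = 0"
proof -
  have "emeasure (distr p K g) (space K - g ` I) = emeasure p {i\<in>I. g i \<in> space K - g ` I}"
    by (rule emeasure_distr_pmf[of p I g K, OF assms])
  also have "{i\<in>I. g i \<in> space K - g ` I} = {}" by blast
  finally show ?thesis by simp
qed

lemma obtain_pmf_with_weights:
  fixes q :: "'i \<Rightarrow> real"
  assumes "finite I" and q: "\<And>i. i \<in> I \<Longrightarrow> 0 \<le> q i" and "(\<Sum>i\<in>I. q i) = 1"
  obtains p :: "'i pmf" where "set_pmf p \<subseteq> I" and "\<And>i. i \<in> I \<Longrightarrow> pmf p i = q i"
proof -
  define f where "f i = (if i \<in> I then q i else 0)" for i
  have f_nonneg: "0 \<le> f i" for i using q by (simp add: f_def)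
  have "(\<integral>\<^sup>+ i. ennreal (f i) \<partial>count_space UNIV) = (\<Sum>i\<in>I. ennreal (f i))"
    using \<open>finite I\<close> by (intro nn_integral_count_space') (auto simp: f_def)
  also have "\<dots> = 1"
    using assms f_nonneg by (simp add: sum_ennreal f_def)
  finally have "(\<integral>\<^sup>+ i. ennreal (f i) \<partial>count_space UNIV) = 1" .
  with f_nonneg show ?thesis
    by (intro that[of "embed_pmf f"]) (auto simp: set_embed_pmf pmf_embed_pmf f_def split: if_splits)
qed

lemma density_slice_eq_distr:
  fixes MX :: "'x measure" and MY :: "'y measure"
  assumes Qs: "sets Q = sets (MX \<Otimes>\<^sub>M MY)" and Ps: "sets Pc = sets MY"
    and x: "{x} \<in> sets MX" and rect: "\<And>A. A \<in> sets MY \<Longrightarrow> emeasure Q ({x} \<times> A) = ennreal q * emeasure Pc A"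
  shows "density Q (indicator ({x} \<times> space MY))
           = distr (density Pc (\<lambda>_. ennreal q)) (MX \<Otimes>\<^sub>M MY) (\<lambda>y. (x, y))"
proof (rule measure_eqI)
  have Pair_x: "(\<lambda>y. (x, y)) \<in> measurable MY (MX \<Otimes>\<^sub>M MY)"
    using sets.sets_into_space[OF x] by (intro measurable_Pair measurable_const measurable_ident) auto
  have slice: "{x} \<times> space MY \<in> sets Q" unfolding Qs by (intro pair_measureI x sets.top)
  show "sets (density Q (indicator ({x} \<times> space MY)))
          = sets (distr (density Pc (\<lambda>_. ennreal q)) (MX \<Otimes>\<^sub>M MY) (\<lambda>y. (x, y)))"
    using Qs by simp
  fix A assume "A \<in> sets (density Q (indicator ({x} \<times> space MY)))"
  then have A: "A \<in> sets (MX \<Otimes>\<^sub>M MY)" using Qs by simp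
  define Ax where "Ax = (\<lambda>y. (x, y)) -` A \<inter> space MY"
  have Ax: "Ax \<in> sets MY" unfolding Ax_def using measurable_sets[OF Pair_x A] .
  have "A \<subseteq> space MX \<times> space MY" using sets.sets_into_space[OF A] by (simp add: space_pair_measure)
  then have "({x} \<times> space MY) \<inter> A = {x} \<times> Ax" unfolding Ax_def by auto
  then have "emeasure (density Q (indicator ({x} \<times> space MY))) A = emeasure Q ({x} \<times> Ax)"
    using A Qs by (subst emeasure_restricted[OF slice]) auto
  also have "\<dots> = emeasure (density Pc (\<lambda>_. ennreal q)) Ax"
    using Ax Ps by (simp add: rect emeasure_density_const)
  also have "\<dots> = emeasure (distr (density Pc (\<lambda>_. ennreal q)) (MX \<Otimes>\<^sub>M MY) (\<lambda>y. (x, y))) A"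
  proof -
    have "(\<lambda>y. (x, y)) \<in> measurable (density Pc (\<lambda>_. ennreal q)) (MX \<Otimes>\<^sub>M MY)"
      using Pair_x by (subst measurable_cong_sets[OF _ refl, where M'=MY]) (auto simp: Ps)
    then show ?thesis
      using A sets_eq_imp_space_eq[OF Ps] unfolding Ax_def by (subst emeasure_distr) auto
  qed
  finally show "emeasure (density Q (indicator ({x} \<times> space MY))) A
      = emeasure (distr (density Pc (\<lambda>_. ennreal q)) (MX \<Otimes>\<^sub>M MY) (\<lambda>y. (x, y))) A" .
qed

lemma
  fixes MX :: "'x measure" and MY :: "'y measure" and F :: "'x \<times> 'y \<Rightarrow> real"
  assumes Qs: "sets Q = sets (MX \<Otimes>\<^sub>M MY)" and Ps: "sets Pc = sets MY"
    and x: "{x} \<in> sets MX" and q: "0 \<le> q"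
    and rect: "\<And>A. A \<in> sets MY \<Longrightarrow> emeasure Q ({x} \<times> A) = ennreal q * emeasure Pc A"
    and F[measurable]: "F \<in> borel_measurable (MX \<Otimes>\<^sub>M MY)"
    and F_x: "integrable Pc (\<lambda>y. F (x, y))"
  shows integrable_slice: "integrable Q (\<lambda>z. indicator ({x} \<times> space MY) z * F z)"
    and integral_slice: "(\<integral>z. indicator ({x} \<times> space MY) z * F z \<partial>Q) = q * (\<integral>y. F (x, y) \<partial>Pc)"
proof -
  have Pair_x: "(\<lambda>y. (x, y)) \<in> measurable MY (MX \<Otimes>\<^sub>M MY)"
    using sets.sets_into_space[OF x] by (intro measurable_Pair measurable_const measurable_ident) auto
  then have Pair_x': "(\<lambda>y. (x, y)) \<in> measurable (density Pc (\<lambda>_. ennreal q)) (MX \<Otimes>\<^sub>M MY)"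
    by (subst measurable_cong_sets[OF _ refl, where M'=MY]) (auto simp: Ps)
  have "(\<lambda>y. (x, y)) \<in> measurable Pc (MX \<Otimes>\<^sub>M MY)"
    using Pair_x by (subst measurable_cong_sets[OF Ps refl])
  then have F_x_measurable: "(\<lambda>y. F (x, y)) \<in> borel_measurable Pc" by measurable
  have F_Q[measurable]: "F \<in> borel_measurable Q"
    using F by (subst measurable_cong_sets[OF Qs refl])
  have slice: "{x} \<times> space MY \<in> sets Q" unfolding Qs by (intro pair_measureI x sets.top)
  have D: "density Q (\<lambda>z. ennreal (indicator ({x} \<times> space MY) z))
             = distr (density Pc (\<lambda>_. ennreal q)) (MX \<Otimes>\<^sub>M MY) (\<lambda>y. (x, y))"
    unfolding ennreal_indicator by (rule density_slice_eq_distr[OF Qs Ps x rect])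
  have "integrable Q (\<lambda>z. indicator ({x} \<times> space MY) z *\<^sub>R F z)
        \<longleftrightarrow> integrable (density Q (\<lambda>z. ennreal (indicator ({x} \<times> space MY) z))) F"
    using slice by (intro integrable_density[symmetric]) auto
  also have "\<dots> \<longleftrightarrow> integrable Pc (\<lambda>y. q *\<^sub>R F (x, y))"
    unfolding D integrable_distr_eq[OF Pair_x' F] using q F_x_measurable
    by (intro integrable_density) auto
  finally show "integrable Q (\<lambda>z. indicator ({x} \<times> space MY) z * F z)"
    using F_x by simp
  have "(\<integral>z. indicator ({x} \<times> space MY) z * F z \<partial>Q)
        = (\<integral>z. F z \<partial>density Q (\<lambda>z. ennreal (indicator ({x} \<times> space MY) z)))"
    using slice by (subst integral_density) auto
  also have "\<dots> = (\<integral>y. q *\<^sub>R F (x, y) \<partial>Pc)"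
    unfolding D integral_distr[OF Pair_x' F] using q F_x_measurable
    by (intro integral_density) auto
  finally show "(\<integral>z. indicator ({x} \<times> space MY) z * F z \<partial>Q) = q * (\<integral>y. F (x, y) \<partial>Pc)"
    by simp
qed

lemma sum_indicator_disjoint_mult:
  fixes f :: "'a \<Rightarrow> real"
  assumes "finite I" and disj: "disjoint_family_on S I" and "z \<in> (\<Union>i\<in>I. S i)"
  shows "(\<Sum>i\<in>I. indicator (S i) z * f z) = f z"
proof -
  obtain i where i: "i \<in> I" "z \<in> S i" using assms(3) by auto
  have "z \<notin> S j" if "j \<in> I" "j \<noteq> i" for j
    using disj i that unfolding disjoint_family_on_def by auto
  then have "(\<Sum>j\<in>I. indicator (S j) z * f z) = (\<Sum>j\<in>I. if j = i then f z else 0)"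
    using i by (intro sum.cong refl) auto
  then show ?thesis using i \<open>finite I\<close> by simp
qed

lemma integral_eq_sum_slices:
  fixes MX :: "'x measure" and MY :: "'y measure" and F :: "'x \<times> 'y \<Rightarrow> real"
    and xs :: "'i \<Rightarrow> 'x" and Pc :: "'i \<Rightarrow> 'y measure" and q :: "'i \<Rightarrow> real"
  assumes "prob_space Q" and Qs: "sets Q = sets (MX \<Otimes>\<^sub>M MY)" and "finite I"
    and Pc: "\<And>i. i \<in> I \<Longrightarrow> prob_space (Pc i)" and Pc_sets: "\<And>i. i \<in> I \<Longrightarrow> sets (Pc i) = sets MY"
    and xs: "\<And>i. i \<in> I \<Longrightarrow> {xs i} \<in> sets MX" and inj: "inj_on xs I"
    and q: "\<And>i. i \<in> I \<Longrightarrow> 0 \<le> q i" and q_sum: "(\<Sum>i\<in>I. q i) = 1"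
    and rect: "\<And>i A. i \<in> I \<Longrightarrow> A \<in> sets MY \<Longrightarrow> emeasure Q ({xs i} \<times> A) = ennreal (q i) * emeasure (Pc i) A"
    and F[measurable]: "F \<in> borel_measurable (MX \<Otimes>\<^sub>M MY)"
    and F_slices: "\<And>i. i \<in> I \<Longrightarrow> integrable (Pc i) (\<lambda>y. F (xs i, y))"
  shows "(\<integral>z. F z \<partial>Q) = (\<Sum>i\<in>I. q i * (\<integral>y. F (xs i, y) \<partial>Pc i))"
proof -
  interpret Q: prob_space Q by fact
  have F_Q[measurable]: "F \<in> borel_measurable Q"
    using F by (subst measurable_cong_sets[OF Qs refl])
  define S where "S i = {xs i} \<times> space MY" for i
  have S_sets: "S i \<in> sets Q" if "i \<in> I" for i
    unfolding S_def Qs using that by (intro pair_measureI xs sets.top)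
  have "measure Q (S i) = q i" if i: "i \<in> I" for i
  proof -
    interpret Pc: prob_space "Pc i" using Pc[OF i] .
    have "emeasure Q (S i) = ennreal (q i) * emeasure (Pc i) (space MY)"
      unfolding S_def by (rule rect[OF i sets.top])
    then show ?thesis
      using q[OF i] Pc.emeasure_space_1 sets_eq_imp_space_eq[OF Pc_sets[OF i]]
      by (simp add: Q.emeasure_eq_measure)
  qed
  moreover have disj: "disjoint_family_on S I"
    unfolding disjoint_family_on_def S_def using inj by (auto simp: inj_on_def)
  ultimately have "measure Q (\<Union>i\<in>I. S i) = 1"
    using S_sets q_sum \<open>finite I\<close> by (subst Q.finite_measure_finite_Union) auto
  then have "AE z in Q. z \<in> (\<Union>i\<in>I. S i)" by (rule Q.AE_prob_1)
  then have "AE z in Q. F z = (\<Sum>i\<in>I. indicator (S i) z * F z)"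
    by eventually_elim (rule sum_indicator_disjoint_mult[OF \<open>finite I\<close> disj, symmetric])
  then have "(\<integral>z. F z \<partial>Q) = (\<integral>z. (\<Sum>i\<in>I. indicator (S i) z * F z) \<partial>Q)"
    using S_sets by (intro integral_cong_AE) auto
  also have "\<dots> = (\<Sum>i\<in>I. (\<integral>z. indicator (S i) z * F z \<partial>Q))"
    unfolding S_def
    by (intro Bochner_Integration.integral_sum integrable_slice[OF Qs Pc_sets xs q rect F F_slices])
  also have "\<dots> = (\<Sum>i\<in>I. q i * (\<integral>y. F (xs i, y) \<partial>Pc i))"
    unfolding S_def
    by (intro sum.cong refl integral_slice[OF Qs Pc_sets xs q rect F F_slices])
  finally show ?thesis .
qed

section \<open>Kullback-Leibler divergence\<close>

lemma enn2ereal_sum_pos_minus_neg: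
  fixes t :: "'b \<Rightarrow> real"
  assumes "finite S"
  shows "enn2ereal (\<Sum>s\<in>S. ennreal (t s)) - enn2ereal (\<Sum>s\<in>S. ennreal (- t s)) = ereal (\<Sum>s\<in>S. t s)"
proof -
  have pos_part: "(\<Sum>s\<in>S. ennreal (u s)) = ennreal (\<Sum>s\<in>S. max 0 (u s))" for u :: "'b \<Rightarrow> real"
  proof -
    have "(\<Sum>s\<in>S. ennreal (u s)) = (\<Sum>s\<in>S. ennreal (max 0 (u s)))"
      by (intro sum.cong refl) (simp add: max_def ennreal_neg)
    also have "\<dots> = ennreal (\<Sum>s\<in>S. max 0 (u s))" by (rule sum_ennreal) auto
    finally show ?thesis .
  qed
  have "(\<Sum>s\<in>S. max 0 (t s)) - (\<Sum>s\<in>S. max 0 (- t s)) = (\<Sum>s\<in>S. t s)"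
    by (simp add: sum_subtractf[symmetric]) (intro sum.cong refl, simp add: max_def)
  then show ?thesis
    unfolding pos_part by (simp add: sum_nonneg)
qed

lemma absolutely_continuous_finite_support:
  assumes "prob_space P2" and sets_eq: "sets P1 = sets P2"
    and sing: "\<And>s. s \<in> S \<Longrightarrow> {s} \<in> sets P2" and S_sets: "S \<in> sets P2"
    and conc: "emeasure P2 (space P2 - S) = 0"
    and pos: "\<And>s. s \<in> S \<Longrightarrow> 0 < measure P2 {s}"
  shows "absolutely_continuous P2 P1 \<longleftrightarrow> emeasure P1 (space P1 - S) = 0"
proof -
  interpret P2: prob_space P2 by fact
  have sp: "space P1 = space P2" using sets_eq by (rule sets_eq_imp_space_eq)
  have D: "space P2 - S \<in> sets P2" using S_sets by auto
  show ?thesis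
  proof
    assume "absolutely_continuous P2 P1"
    then show "emeasure P1 (space P1 - S) = 0"
      using absolutely_continuousD[OF _ D conc] sp by simp
  next
    assume z: "emeasure P1 (space P1 - S) = 0"
    show "absolutely_continuous P2 P1"
      unfolding absolutely_continuous_def
    proof
      fix A assume A: "A \<in> null_sets P2"
      have "A \<inter> S = {}"
      proof (rule ccontr)
        assume "A \<inter> S \<noteq> {}"
        then obtain s where s: "s \<in> A" "s \<in> S" by auto
        have "emeasure P2 {s} \<le> emeasure P2 A"
          using A s sing by (intro emeasure_mono) auto
        then have "emeasure P2 {s} = 0" using A by auto
        then show False using pos[OF s(2)] by (simp add: P2.emeasure_eq_measure)
      qed
      then have "A \<subseteq> space P1 - S" using A sets.sets_into_space sp by fastforce
      then have "emeasure P1 A \<le> emeasure P1 (space P1 - S)"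
        using D sets_eq sp by (intro emeasure_mono) auto
      then show "A \<in> null_sets P1" using z A sets_eq by auto
    qed
  qed
qed

lemma enn2real_RN_deriv_singleton:
  assumes P1: "prob_space P1" and P2: "prob_space P2" and sets_eq: "sets P1 = sets P2"
    and ac: "absolutely_continuous P2 P1" and "{s} \<in> sets P2" and "0 < measure P2 {s}"
  shows "enn2real (RN_deriv P2 P1 s) = measure P1 {s} / measure P2 {s}"
proof -
  interpret P1: prob_space P1 by fact
  interpret P2: prob_space P2 by fact
  have "emeasure P1 {s} = RN_deriv P2 P1 s * emeasure P2 {s}"
    by (rule P2.RN_deriv_singleton[OF ac sets_eq \<open>{s} \<in> sets P2\<close>])
  then have "enn2real (emeasure P1 {s}) = enn2real (RN_deriv P2 P1 s * emeasure P2 {s})"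
    by simp
  then have "measure P1 {s} = enn2real (RN_deriv P2 P1 s) * measure P2 {s}"
    by (simp add: P1.emeasure_eq_measure P2.emeasure_eq_measure enn2real_mult)
  then show ?thesis using \<open>0 < measure P2 {s}\<close> by (simp add: field_simps)
qed

lemma KL_finite_support:
  assumes P1: "prob_space P1" and P2: "prob_space P2" and sets_eq: "sets P1 = sets P2"
    and S: "finite S" and sing: "\<And>s. s \<in> S \<Longrightarrow> {s} \<in> sets P2"
    and conc2: "emeasure P2 (space P2 - S) = 0"
    and pos: "\<And>s. s \<in> S \<Longrightarrow> 0 < measure P2 {s}"
  shows "KL P1 P2 = (if emeasure P1 (space P1 - S) = 0
                     then ereal (\<Sum>s\<in>S. measure P1 {s} * ln (measure P1 {s} / measure P2 {s}))
                     else \<infinity>)"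
proof -
  interpret P1: prob_space P1 by fact
  interpret P2: prob_space P2 by fact
  have S_sets: "S \<in> sets P2" by (rule sets.countable) (use sing S in \<open>auto intro: countable_finite\<close>)
  note ac_iff = absolutely_continuous_finite_support[OF P2 sets_eq sing S_sets conc2 pos]
  show ?thesis
  proof (cases "emeasure P1 (space P1 - S) = 0")
    case False
    then show ?thesis using ac_iff by (simp add: KL_def)
  next
    case conc1: True
    have ac: "absolutely_continuous P2 P1" using ac_iff conc1 by simp
    note RN = enn2real_RN_deriv_singleton[OF P1 P2 sets_eq ac sing pos]
    have ae: "AE z in P1. z \<in> S"
      using conc1 S_sets sets_eq by (intro AE_I'[where N="space P1 - S"]) auto
    define t where "t s = measure P1 {s} * ln (measure P1 {s} / measure P2 {s})" for s
    have part: "(\<integral>\<^sup>+z. ennreal (\<sigma> * ln (enn2real (RN_deriv P2 P1 z))) \<partial>P1)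
                = (\<Sum>s\<in>S. ennreal (\<sigma> * t s))" if "\<sigma> \<in> {1, -1}" for \<sigma> :: real
    proof -
      have "(\<integral>\<^sup>+z. ennreal (\<sigma> * ln (enn2real (RN_deriv P2 P1 z))) \<partial>P1)
            = (\<Sum>s\<in>S. ennreal (\<sigma> * ln (enn2real (RN_deriv P2 P1 s))) * emeasure P1 {s})"
        by (rule nn_integral_finite_support[OF S ae]) (use sing sets_eq in auto)
      also have "\<dots> = (\<Sum>s\<in>S. ennreal (\<sigma> * t s))"
      proof (intro sum.cong refl)
        fix s assume "s \<in> S"
        then have "ennreal (\<sigma> * ln (enn2real (RN_deriv P2 P1 s))) * emeasure P1 {s}
            = ennreal (\<sigma> * ln (measure P1 {s} / measure P2 {s})) * ennreal (measure P1 {s})"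
          by (simp add: RN P1.emeasure_eq_measure)
        also have "\<dots> = ennreal (\<sigma> * t s)"
          by (subst ennreal_mult''[symmetric]) (simp_all add: t_def algebra_simps)
        finally show "ennreal (\<sigma> * ln (enn2real (RN_deriv P2 P1 s))) * emeasure P1 {s} = ennreal (\<sigma> * t s)" .
      qed
      finally show ?thesis .
    qed
    show ?thesis
      using part[of 1] part[of "-1"] ac sets_eq conc1
      by (simp add: KL_def enn2ereal_sum_pos_minus_neg[OF S] t_def)
  qed
qed

lemma KL_distr_pmf_of_set:
  assumes Q: "prob_space Q" and Q_sets: "sets Q = sets K" and "finite I" and "I \<noteq> {}"
    and g: "\<And>i. i \<in> I \<Longrightarrow> g i \<in> space K" and sing: "\<And>i. i \<in> I \<Longrightarrow> {g i} \<in> sets K"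
    and inj: "inj_on g I"
  shows "KL Q (distr (pmf_of_set I) K g)
           = (if emeasure Q (space Q - g ` I) = 0
              then ereal (\<Sum>i\<in>I. measure Q {g i} * ln (measure Q {g i} * card I))
              else \<infinity>)"
proof -
  let ?P = "distr (pmf_of_set I) K g"
  have sp: "set_pmf (pmf_of_set I) \<subseteq> I" using assms by simp
  have gI: "g ` I \<in> sets K"
    by (rule sets.countable) (use sing \<open>finite I\<close> in \<open>auto intro: countable_finite\<close>)
  have point: "measure ?P {g i} = 1 / card I" if "i \<in> I" for i
    using measure_distr_pmf_singleton[OF sp g inj that sing[OF that]] assms that by simp
  have "KL Q ?P = (if emeasure Q (space Q - g ` I) = 0
                   then ereal (\<Sum>s\<in>g ` I. measure Q {s} * ln (measure Q {s} / measure ?P {s}))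
                   else \<infinity>)"
  proof (rule KL_finite_support)
    show "emeasure ?P (space ?P - g ` I) = 0"
      using emeasure_distr_pmf_outside_image[OF sp g] gI by auto
  qed (use assms point prob_space_distr_pmf[OF sp g] in \<open>auto simp: card_gt_0_iff\<close>)
  also have "(\<Sum>s\<in>g ` I. measure Q {s} * ln (measure Q {s} / measure ?P {s}))
             = (\<Sum>i\<in>I. measure Q {g i} * ln (measure Q {g i} * card I))"
    using inj point by (simp add: sum.reindex)
  finally show ?thesis .
qed

lemma KL_distr_pmf_distr_pmf_of_set:
  fixes p :: "'i pmf"
  assumes sp: "set_pmf p \<subseteq> I" and "finite I"
    and g: "\<And>i. i \<in> I \<Longrightarrow> g i \<in> space K" and sing: "\<And>i. i \<in> I \<Longrightarrow> {g i} \<in> sets K"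
    and inj: "inj_on g I"
  shows "KL (distr p K g) (distr (pmf_of_set I) K g) = ereal (\<Sum>i\<in>I. pmf p i * ln (pmf p i * card I))"
proof -
  have "I \<noteq> {}" using sp set_pmf_not_empty[of p] by blast
  have "g ` I \<in> sets K"
    by (rule sets.countable) (use sing \<open>finite I\<close> in \<open>auto intro: countable_finite\<close>)
  then have "emeasure (distr p K g) (space (distr p K g) - g ` I) = 0"
    using emeasure_distr_pmf_outside_image[OF sp g] by simp
  then show ?thesis
    using KL_distr_pmf_of_set[OF prob_space_distr_pmf[OF sp g] _ \<open>finite I\<close> \<open>I \<noteq> {}\<close> g sing inj]
          measure_distr_pmf_singleton[OF sp g inj _ sing]
    by simp
qed

lemma KL_self:
  assumes "prob_space P"
  shows "KL P P = 0"
proof -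
  interpret prob_space P by fact
  have "AE x in P. (\<lambda>_. 1) x = RN_deriv P P x"
    by (rule RN_deriv_unique) (auto simp: density_1)
  then have ae: "AE x in P. RN_deriv P P x = 1" by auto
  have "(\<integral>\<^sup>+z. ennreal (\<sigma> * ln (enn2real (RN_deriv P P z))) \<partial>P) = 0" for \<sigma> :: real
    by (subst nn_integral_cong_AE[where v="\<lambda>_. 0"]) (use ae in \<open>eventually_elim, simp\<close>, simp)
  from this[of 1] this[of "-1"] show ?thesis
    by (simp add: KL_def absolutely_continuous_def)
qed

lemma xlnx_minus_x_plus_1_nonneg:
  fixes r :: real
  assumes "0 \<le> r"
  shows "0 \<le> r * ln r - r + 1"
proof (cases "r = 0")
  case False
  with assms have "0 < r" by simp
  have "ln (1/r) \<le> 1/r - 1" using \<open>0 < r\<close> by (intro ln_le_minus_one) simp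
  then have "r * (- ln r) \<le> r * (1/r - 1)" using \<open>0 < r\<close> by (intro mult_left_mono) (auto simp: ln_div)
  moreover have "r * (1/r - 1) = 1 - r" using \<open>0 < r\<close> by (simp add: field_simps)
  ultimately show ?thesis by simp
qed simp

lemma xlnx_minus_x_plus_1_eq_0_imp:
  fixes r :: real
  assumes "0 \<le> r" and "r * ln r - r + 1 = 0"
  shows "r = 1"
proof (cases "r = 0")
  case False
  with assms have "0 < r" by simp
  have "ln (1/r) = 1/r - 1"
    using assms \<open>0 < r\<close> by (simp add: ln_div field_simps)
  then have "1/r = 1" using \<open>0 < r\<close> by (intro ln_eq_minus_one) auto
  then show ?thesis by simp
qed (use assms in simp)

lemma ennreal_xlnx_split:
  fixes r :: real
  assumes r: "0 \<le> r"
  shows "ennreal (r * ln r) + 1 = ennreal (- (r * ln r)) + ennreal r + ennreal (r * ln r - r + 1)"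
proof -
  have u: "0 \<le> r * ln r - r + 1" using xlnx_minus_x_plus_1_nonneg[OF r] .
  show ?thesis
  proof (cases "0 \<le> r * ln r")
    case True
    have "ennreal r + ennreal (r * ln r - r + 1) = ennreal (r * ln r + 1)"
      by (subst ennreal_plus[symmetric]) (use r u in auto)
    moreover have "ennreal (r * ln r + 1) = ennreal (r * ln r) + 1"
      using True by (subst ennreal_plus) auto
    ultimately show ?thesis using True by (simp add: ennreal_neg add.assoc)
  next
    case False
    have "ennreal (- (r * ln r)) + ennreal r + ennreal (r * ln r - r + 1) = ennreal 1"
      using False r u by (simp add: ennreal_plus[symmetric])
    then show ?thesis using False by (simp add: ennreal_neg)
  qed
qed

lemma
  assumes P1: "prob_space P1" and P2: "prob_space P2" and sets_eq: "sets P1 = sets P2"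
    and ac: "absolutely_continuous P2 P1"
  defines "r \<equiv> \<lambda>z. enn2real (RN_deriv P2 P1 z)"
  shows RN_deriv_eq_ennreal: "AE z in P2. RN_deriv P2 P1 z = ennreal (r z)"
    and nn_integral_RN_deriv_real: "(\<integral>\<^sup>+z. ennreal (r z) \<partial>P2) = 1"
    and KL_eq_xlnx_RN_deriv:
      "KL P1 P2 = enn2ereal (\<integral>\<^sup>+z. ennreal (r z * ln (r z)) \<partial>P2)
                  - enn2ereal (\<integral>\<^sup>+z. ennreal (- (r z * ln (r z))) \<partial>P2)"
proof -
  interpret P1: prob_space P1 by fact
  interpret P2: prob_space P2 by fact
  have dens: "density P2 (RN_deriv P2 P1) = P1"
    by (rule P2.density_RN_deriv[OF ac sets_eq])
  have "AE z in P2. RN_deriv P2 P1 z \<noteq> \<infinity>"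
    by (rule P2.RN_deriv_finite[OF _ ac sets_eq]) unfold_locales
  then show RN: "AE z in P2. RN_deriv P2 P1 z = ennreal (r z)"
    by eventually_elim (simp add: r_def less_top[symmetric])
  have "(\<integral>\<^sup>+z. ennreal (r z) \<partial>P2) = (\<integral>\<^sup>+z. RN_deriv P2 P1 z \<partial>P2)"
    by (rule nn_integral_cong_AE) (use RN in \<open>eventually_elim, simp\<close>)
  also have "\<dots> = emeasure (density P2 (RN_deriv P2 P1)) (space P2)"
    by (simp add: emeasure_density)
  also have "\<dots> = emeasure P1 (space P1)"
    using dens sets_eq_imp_space_eq[OF sets_eq] by simp
  finally show "(\<integral>\<^sup>+z. ennreal (r z) \<partial>P2) = 1" by (simp add: P1.emeasure_space_1)
  have part: "(\<integral>\<^sup>+z. ennreal (\<sigma> * ln (r z)) \<partial>P1) = (\<integral>\<^sup>+z. ennreal (\<sigma> * (r z * ln (r z))) \<partial>P2)"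
    for \<sigma> :: real
  proof -
    have "(\<integral>\<^sup>+z. ennreal (\<sigma> * ln (r z)) \<partial>P1) = (\<integral>\<^sup>+z. RN_deriv P2 P1 z * ennreal (\<sigma> * ln (r z)) \<partial>P2)"
      by (subst (1) dens[symmetric]) (rule nn_integral_density, auto simp: r_def)
    also have "\<dots> = (\<integral>\<^sup>+z. ennreal (\<sigma> * (r z * ln (r z))) \<partial>P2)"
    proof (rule nn_integral_cong_AE)
      show "AE z in P2. RN_deriv P2 P1 z * ennreal (\<sigma> * ln (r z)) = ennreal (\<sigma> * (r z * ln (r z)))"
        using RN
      proof eventually_elim
        case (elim z)
        have "0 \<le> r z" by (simp add: r_def)
        then show ?case using elim by (simp add: ennreal_mult'[symmetric] algebra_simps)
      qed
    qed
    finally show ?thesis .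
  qed
  show "KL P1 P2 = enn2ereal (\<integral>\<^sup>+z. ennreal (r z * ln (r z)) \<partial>P2)
                  - enn2ereal (\<integral>\<^sup>+z. ennreal (- (r z * ln (r z))) \<partial>P2)"
    using part[of 1] part[of "-1"] ac sets_eq by (simp add: KL_def r_def)
qed

lemma nn_integral_xlnx_split:
  assumes "prob_space M" and [measurable]: "r \<in> borel_measurable M" and r_nonneg: "\<And>z. 0 \<le> r z"
    and r_int: "(\<integral>\<^sup>+z. ennreal (r z) \<partial>M) = 1"
  shows "(\<integral>\<^sup>+z. ennreal (r z * ln (r z)) \<partial>M) + 1
           = (\<integral>\<^sup>+z. ennreal (- (r z * ln (r z))) \<partial>M) + 1 + (\<integral>\<^sup>+z. ennreal (r z * ln (r z) - r z + 1) \<partial>M)"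
proof -
  interpret prob_space M by fact
  have "(\<integral>\<^sup>+z. ennreal (r z * ln (r z)) \<partial>M) + 1 = (\<integral>\<^sup>+z. ennreal (r z * ln (r z)) + 1 \<partial>M)"
    by (subst nn_integral_add) (auto simp: emeasure_space_1)
  also have "\<dots> = (\<integral>\<^sup>+z. ennreal (- (r z * ln (r z))) + ennreal (r z) + ennreal (r z * ln (r z) - r z + 1) \<partial>M)"
    by (intro nn_integral_cong) (simp add: ennreal_xlnx_split r_nonneg)
  also have "\<dots> = (\<integral>\<^sup>+z. ennreal (- (r z * ln (r z))) \<partial>M) + 1 + (\<integral>\<^sup>+z. ennreal (r z * ln (r z) - r z + 1) \<partial>M)"
    unfolding r_int[symmetric] by (subst nn_integral_add; simp)+
  finally show ?thesis .
qed

lemma ennreal_eq_zero_if_add_one_eq: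
  fixes A B U :: ennreal
  assumes AB: "A + 1 = B + 1 + U" and le: "enn2ereal A - enn2ereal B \<le> 0"
  shows "U = 0"
proof -
  have "A \<noteq> \<infinity>"
  proof
    assume "A = \<infinity>"
    moreover from this have "B = \<infinity>" using le by (cases B) auto
    ultimately show False using le by simp
  qed
  then have "B \<noteq> \<infinity>" using AB by (auto simp: ennreal_add_eq_top)
  have "A \<le> B"
    using le by (cases A; cases B) (auto simp: ereal_minus_le_iff)
  then have "B + 1 + U \<le> B + 1 + 0" using AB by (metis add.right_neutral add_right_mono)
  then show "U = 0"
    using \<open>B \<noteq> \<infinity>\<close> ennreal_add_left_cancel_le[of "B + 1" U 0] by (simp add: ennreal_add_eq_top)
qed

lemma KL_nonpos_imp_eq:
  assumes P1: "prob_space P1" and P2: "prob_space P2" and sets_eq: "sets P1 = sets P2"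
    and KL: "KL P1 P2 \<le> 0"
  shows "P1 = P2"
proof -
  interpret P2: prob_space P2 by fact
  have ac: "absolutely_continuous P2 P1"
    using KL by (auto simp: KL_def split: if_splits)
  define r where "r z = enn2real (RN_deriv P2 P1 z)" for z
  have r_nonneg: "0 \<le> r z" for z by (simp add: r_def)
  have r_measurable[measurable]: "r \<in> borel_measurable P2" unfolding r_def by measurable
  have "(\<integral>\<^sup>+z. ennreal (r z * ln (r z) - r z + 1) \<partial>P2) = 0"
    using nn_integral_xlnx_split[OF P2 r_measurable r_nonneg]
      nn_integral_RN_deriv_real[OF P1 P2 sets_eq ac] KL_eq_xlnx_RN_deriv[OF P1 P2 sets_eq ac] KL
    by (intro ennreal_eq_zero_if_add_one_eq) (simp_all add: r_def)
  then have "AE z in P2. ennreal (r z * ln (r z) - r z + 1) = 0"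
    by (subst (asm) nn_integral_0_iff_AE) auto
  then have "AE z in P2. RN_deriv P2 P1 z = 1"
    using RN_deriv_eq_ennreal[OF P1 P2 sets_eq ac]
  proof eventually_elim
    case (elim z)
    then have "r z * ln (r z) - r z + 1 = 0"
      using xlnx_minus_x_plus_1_nonneg[OF r_nonneg] by simp
    then show ?case
      using elim xlnx_minus_x_plus_1_eq_0_imp[OF r_nonneg] by (simp add: r_def)
  qed
  then have "density P2 (RN_deriv P2 P1) = density P2 (\<lambda>_. 1)"
    by (intro density_cong) auto
  then show ?thesis
    using P2.density_RN_deriv[OF ac sets_eq] by (simp add: density_1)
qed

section \<open>Mean of the sufficient statistic\<close>

lemma abs_le_exp_sum_div:
  fixes x d :: real
  assumes "0 < d"
  shows "\<bar>x\<bar> \<le> (exp (d * x) + exp (- d * x)) / d"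
proof -
  have "d * \<bar>x\<bar> \<le> exp (d * \<bar>x\<bar>)" using exp_ge_add_one_self[of "d * \<bar>x\<bar>"] by linarith
  also have "\<dots> \<le> exp (d * x) + exp (- d * x)"
    by (cases "0 \<le> x") (simp_all add: add_increasing add_increasing2)
  finally show ?thesis using assms by (simp add: field_simps)
qed

locale exp_family =
  fixes nu :: "'y measure" and h :: "'y \<Rightarrow> real" and T :: "'y \<Rightarrow> 'p::euclidean_space"
  assumes h_nonneg: "\<And>y. y \<in> space nu \<Longrightarrow> 0 \<le> h y"
    and h_measurable[measurable]: "h \<in> borel_measurable nu"
    and T_measurable[measurable]: "T \<in> borel_measurable nu"
    and regular: "regular_expfam nu h T"
begin

definition normaliser :: "'p \<Rightarrow> ennreal" where
  "normaliser \<theta> = (\<integral>\<^sup>+ y. ennreal (h y * exp (\<theta> \<bullet> T y)) \<partial>nu)"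

abbreviation family_measure :: "'p \<Rightarrow> 'y measure" where
  "family_measure \<theta> \<equiv> density nu (\<lambda>y. ennreal (expfam_density nu h T \<theta> y))"

lemma open_Theta: "open (Theta nu h T)"
  using regular unfolding regular_expfam_def by simp

text \<open>Regularity with \<open>a = 0\<close>, \<open>c = 1\<close> says that \<open>h\<close> does not vanish \<open>nu\<close>-almost everywhere.\<close>

lemma normaliser_nonzero: "normaliser \<theta> \<noteq> 0"
proof
  assume "normaliser \<theta> = 0"
  then have "AE y in nu. ennreal (h y * exp (\<theta> \<bullet> T y)) = 0"
    unfolding normaliser_def by (subst (asm) nn_integral_0_iff_AE) auto
  then have "AE y in nu. h y \<noteq> 0 \<longrightarrow> (0::'p) \<bullet> T y = 1"
    using AE_space
  proof eventually_elim
    case (elim y)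
    then have "h y \<le> 0" by (simp only: ennreal_eq_0_iff) (simp add: mult_le_0_iff)
    with h_nonneg[OF elim(2)] show ?case by simp
  qed
  then show False
    using regular[unfolded regular_expfam_def, THEN conjunct2, rule_format, of 0 1] by simp
qed

lemma normaliser_eq_exp_Psi:
  assumes "\<theta> \<in> Theta nu h T"
  shows "normaliser \<theta> = ennreal (exp (Psi nu h T \<theta>))"
proof -
  have "normaliser \<theta> < \<infinity>" using assms unfolding Theta_def normaliser_def by simp
  moreover have "0 < enn2real (normaliser \<theta>)"
    using calculation normaliser_nonzero[of \<theta>]
    by (simp add: enn2real_positive_iff less_top[symmetric] zero_less_iff_neq_zero)
  ultimately show ?thesis unfolding Psi_def normaliser_def[symmetric] by simp
qed

lemma expfam_density_measurable[measurable]: "expfam_density nu h T \<theta> \<in> borel_measurable nu"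
  unfolding expfam_density_def[abs_def] by measurable

lemma expfam_density_nonneg: "y \<in> space nu \<Longrightarrow> 0 \<le> expfam_density nu h T \<theta> y"
  unfolding expfam_density_def using h_nonneg by simp

lemma nn_integral_expfam_density_tilt:
  "(\<integral>\<^sup>+ y. ennreal (expfam_density nu h T \<theta> y * exp (t * (T y \<bullet> v))) \<partial>nu)
     = normaliser (\<theta> + t *\<^sub>R v) * ennreal (exp (- Psi nu h T \<theta>))"
proof -
  have "expfam_density nu h T \<theta> y * exp (t * (T y \<bullet> v))
          = h y * exp ((\<theta> + t *\<^sub>R v) \<bullet> T y) * exp (- Psi nu h T \<theta>)" for y
    unfolding expfam_density_def
    by (simp add: mult_exp_exp inner_add_left inner_commute[of v] algebra_simps)
  then have "(\<integral>\<^sup>+ y. ennreal (expfam_density nu h T \<theta> y * exp (t * (T y \<bullet> v))) \<partial>nu)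
      = (\<integral>\<^sup>+ y. ennreal (h y * exp ((\<theta> + t *\<^sub>R v) \<bullet> T y)) * ennreal (exp (- Psi nu h T \<theta>)) \<partial>nu)"
    by (simp add: ennreal_mult'')
  also have "\<dots> = normaliser (\<theta> + t *\<^sub>R v) * ennreal (exp (- Psi nu h T \<theta>))"
    unfolding normaliser_def by (rule nn_integral_multc) measurable
  finally show ?thesis .
qed

lemma prob_space_family_measure:
  assumes "\<theta> \<in> Theta nu h T"
  shows "prob_space (family_measure \<theta>)"
proof (rule prob_spaceI)
  have "emeasure (family_measure \<theta>) (space (family_measure \<theta>))
      = (\<integral>\<^sup>+ y. ennreal (expfam_density nu h T \<theta> y * exp (0 * (T y \<bullet> 0))) \<partial>nu)"
    by (simp add: emeasure_density nn_integral_set_ennreal[symmetric])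
  also have "\<dots> = ennreal (exp (Psi nu h T \<theta>)) * ennreal (exp (- Psi nu h T \<theta>))"
    by (simp only: nn_integral_expfam_density_tilt normaliser_eq_exp_Psi[OF assms] scale_zero_left add_0_right)
  also have "\<dots> = 1" by (simp add: ennreal_mult''[symmetric] mult_exp_exp)
  finally show "emeasure (family_measure \<theta>) (space (family_measure \<theta>)) = 1" .
qed


lemma Theta_contains_segment:
  assumes "\<theta> \<in> Theta nu h T"
  obtains d where "0 < d" and "\<And>t. \<bar>t\<bar> \<le> d \<Longrightarrow> \<theta> + t *\<^sub>R v \<in> Theta nu h T"
proof -
  obtain r where "0 < r" and r: "ball \<theta> r \<subseteq> Theta nu h T"
    using open_Theta assms by (meson openE)
  define d where "d = r / (2 * (norm v + 1))"
  have "0 < d" unfolding d_def using \<open>0 < r\<close> by (simp add: add_nonneg_pos)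
  moreover have "\<theta> + t *\<^sub>R v \<in> Theta nu h T" if "\<bar>t\<bar> \<le> d" for t
  proof -
    have "dist \<theta> (\<theta> + t *\<^sub>R v) = \<bar>t\<bar> * norm v" by (simp add: dist_norm)
    also have "\<dots> \<le> d * norm v" using that by (intro mult_right_mono) auto
    also have "\<dots> < r"
    proof -
      have "0 < 2 * (norm v + 1)" by (simp add: add_nonneg_pos)
      then show ?thesis
        unfolding d_def using \<open>0 < r\<close>
        by (simp add: field_simps) (smt (verit) mult_nonneg_nonneg norm_ge_zero)
    qed
    finally show ?thesis using r by auto
  qed
  ultimately show ?thesis by (rule that)
qed

lemma
  assumes "\<theta> \<in> Theta nu h T" and "\<theta> + t *\<^sub>R v \<in> Theta nu h T"
  shows integrable_exp_tilt: "integrable (family_measure \<theta>) (\<lambda>y. exp (t * (T y \<bullet> v)))"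
    and integral_exp_tilt: "(\<integral>y. exp (t * (T y \<bullet> v)) \<partial>family_measure \<theta>)
                              = exp (Psi nu h T (\<theta> + t *\<^sub>R v) - Psi nu h T \<theta>)"
proof -
  let ?g = "\<lambda>y. expfam_density nu h T \<theta> y * exp (t * (T y \<bullet> v))"
  have nonneg: "AE y in nu. 0 \<le> expfam_density nu h T \<theta> y"
    by (intro AE_I2 expfam_density_nonneg)
  have nn: "(\<integral>\<^sup>+y. ennreal (?g y) \<partial>nu) = ennreal (exp (Psi nu h T (\<theta> + t *\<^sub>R v) - Psi nu h T \<theta>))"
    using assms(2)
    by (simp add: nn_integral_expfam_density_tilt normaliser_eq_exp_Psi ennreal_mult''[symmetric] mult_exp_exp)
  have "integrable nu ?g"
    using nonneg nn by (intro integrableI_nonneg) (auto elim!: eventually_mono)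
  then show "integrable (family_measure \<theta>) (\<lambda>y. exp (t * (T y \<bullet> v)))"
    using nonneg by (subst integrable_density) simp_all
  have "(\<integral>y. exp (t * (T y \<bullet> v)) \<partial>family_measure \<theta>) = (\<integral>y. ?g y \<partial>nu)"
    using nonneg by (subst integral_density) simp_all
  also have "\<dots> = enn2real (\<integral>\<^sup>+y. ennreal (?g y) \<partial>nu)"
    using nonneg by (intro integral_eq_nn_integral) (auto elim!: eventually_mono)
  finally show "(\<integral>y. exp (t * (T y \<bullet> v)) \<partial>family_measure \<theta>)
                  = exp (Psi nu h T (\<theta> + t *\<^sub>R v) - Psi nu h T \<theta>)"
    by (simp add: nn)
qed

lemma integrable_T_inner:
  assumes "\<theta> \<in> Theta nu h T"
  shows "integrable (family_measure \<theta>) (\<lambda>y. T y \<bullet> v)"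
proof -
  obtain d where "0 < d" and d: "\<And>t. \<bar>t\<bar> \<le> d \<Longrightarrow> \<theta> + t *\<^sub>R v \<in> Theta nu h T"
    using Theta_contains_segment[OF assms, where v=v] by blast
  show ?thesis
  proof (rule Bochner_Integration.integrable_bound)
    show "integrable (family_measure \<theta>) (\<lambda>y. (exp (d * (T y \<bullet> v)) + exp (- d * (T y \<bullet> v))) / d)"
      using integrable_exp_tilt[OF assms d, of d] integrable_exp_tilt[OF assms d, of "-d"] \<open>0 < d\<close>
      by (intro integrable_divide_zero Bochner_Integration.integrable_add) auto
    show "AE y in family_measure \<theta>. norm (T y \<bullet> v) \<le> norm ((exp (d * (T y \<bullet> v)) + exp (- d * (T y \<bullet> v))) / d)"
      using abs_le_exp_sum_div[OF \<open>0 < d\<close>] \<open>0 < d\<close> by (intro AE_I2) (simp add: abs_le_iff add_pos_pos)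
  qed simp
qed

lemma expectation_T_inner_eq_derivative:
  assumes \<theta>: "\<theta> \<in> Theta nu h T" and Psi': "(Psi nu h T has_derivative (\<lambda>u. a \<bullet> u)) (at \<theta>)"
  shows "(\<integral>y. T y \<bullet> v \<partial>family_measure \<theta>) = a \<bullet> v"
proof -
  interpret prob_space "family_measure \<theta>" by (rule prob_space_family_measure[OF \<theta>])
  obtain d where "0 < d" and d: "\<And>t. \<bar>t\<bar> \<le> d \<Longrightarrow> \<theta> + t *\<^sub>R v \<in> Theta nu h T"
    using Theta_contains_segment[OF \<theta>, where v=v] by blast
  define m where "m = (\<integral>y. T y \<bullet> v \<partial>family_measure \<theta>)"
  have Jensen: "t * m \<le> Psi nu h T (\<theta> + t *\<^sub>R v) - Psi nu h T \<theta>" if "\<bar>t\<bar> \<le> d" for t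
  proof -
    have "exp (t * m) = exp (\<integral>y. t * (T y \<bullet> v) \<partial>family_measure \<theta>)"
      by (simp add: m_def)
    also have "\<dots> \<le> (\<integral>y. exp (t * (T y \<bullet> v)) \<partial>family_measure \<theta>)"
      using integrable_T_inner[OF \<theta>] integrable_exp_tilt[OF \<theta> d[OF that]]
      by (intro jensens_inequality[where I=UNIV] exp_convex) auto
    also have "\<dots> = exp (Psi nu h T (\<theta> + t *\<^sub>R v) - Psi nu h T \<theta>)"
      by (rule integral_exp_tilt[OF \<theta> d[OF that]])
    finally show ?thesis by simp
  qed
  have "((\<lambda>t::real. \<theta> + t *\<^sub>R v) has_derivative (\<lambda>t. t *\<^sub>R v)) (at 0)"
    by (auto intro!: derivative_eq_intros)
  moreover have "(Psi nu h T has_derivative (\<lambda>u. a \<bullet> u)) (at (\<theta> + (0::real) *\<^sub>R v))"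
    using Psi' by simp
  ultimately have "((\<lambda>t. Psi nu h T (\<theta> + t *\<^sub>R v)) has_derivative (\<lambda>t. a \<bullet> (t *\<^sub>R v))) (at 0)"
    by (rule has_derivative_compose)
  then have "((\<lambda>t. Psi nu h T (\<theta> + t *\<^sub>R v)) has_real_derivative a \<bullet> v) (at 0)"
    by (rule has_derivative_imp_has_field_derivative) simp
  then have "((\<lambda>t. Psi nu h T (\<theta> + t *\<^sub>R v) - t * m) has_real_derivative (a \<bullet> v - m)) (at 0)"
    by (auto intro!: derivative_eq_intros)
  then have "a \<bullet> v - m = 0"
  proof (rule DERIV_local_min[OF _ \<open>0 < d\<close>], intro allI impI)
    fix t :: real
    assume "\<bar>0 - t\<bar> < d"
    then show "Psi nu h T (\<theta> + 0 *\<^sub>R v) - 0 * m \<le> Psi nu h T (\<theta> + t *\<^sub>R v) - t * m"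
      using Jensen[of t] by simp
  qed
  then show ?thesis by (simp add: m_def)
qed

end

section \<open>The two ambiguity sets\<close>

locale distinct_covariates_dro = exp_family nu h T
  for nu :: "'y::euclidean_space measure" and h :: "'y \<Rightarrow> real" and T :: "'y \<Rightarrow> 'p::euclidean_space" +
  fixes Xcal :: "'x::euclidean_space set" and Ycal :: "'y set" and lam :: "'w \<Rightarrow> 'x \<Rightarrow> 'p"
    and N :: nat and xh :: "nat \<Rightarrow> 'x" and yh :: "nat \<Rightarrow> 'y" and th :: "nat \<Rightarrow> 'p"
    and eps :: real and w :: 'w
  assumes nu_sets: "sets nu = sets (restrict_space borel Ycal)"
    and lam_Theta: "\<And>x. x \<in> Xcal \<Longrightarrow> lam w x \<in> Theta nu h T"
    and N_pos: "1 \<le> N"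
    and xh_in: "\<And>i. i < N \<Longrightarrow> xh i \<in> Xcal" and yh_in: "\<And>i. i < N \<Longrightarrow> yh i \<in> Ycal"
    and xh_inj: "inj_on xh {..<N}"
    and th_Theta: "\<And>c. c < N \<Longrightarrow> th c \<in> Theta nu h T"
    and th_grad: "\<And>c. c < N \<Longrightarrow> (Psi nu h T has_derivative (\<lambda>v. T (yh c) \<bullet> v)) (at (th c))"
begin

abbreviation "MX \<equiv> restrict_space (borel :: 'x measure) Xcal"
abbreviation "MY \<equiv> restrict_space (borel :: 'y measure) Ycal"
abbreviation "MXY \<equiv> MX \<Otimes>\<^sub>M MY"
abbreviation "PX \<equiv> distr (measure_pmf (pmf_of_set {..<N})) MX xh"
abbreviation "P_emp \<equiv> distr (measure_pmf (pmf_of_set {..<N})) MXY (\<lambda>i. (xh i, yh i))"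
abbreviation "loss \<equiv> \<lambda>z. ell_loss nu h T lam (fst z) (snd z) w"
abbreviation "ambiguity_set \<equiv> amb_set MX MY nu h T N xh PX th (\<lambda>_. 0) eps"
abbreviation "KL_ball \<equiv> {Q. prob_space Q \<and> sets Q = sets MXY \<and> KL Q P_emp \<le> ereal eps}"

definition feasible_weights :: "(nat \<Rightarrow> real) \<Rightarrow> bool" where
  "feasible_weights q \<longleftrightarrow>
     (\<forall>c<N. 0 \<le> q c) \<and> (\<Sum>c<N. q c) = 1 \<and> (\<Sum>c<N. q c * ln (q c * N)) \<le> eps"

text \<open>A non-measurable loss has Bochner integral \<open>0\<close> against every measure, hence the case split.\<close>

definition loss_value :: "(nat \<Rightarrow> real) \<Rightarrow> ereal" where
  "loss_value q = (if loss \<in> borel_measurable MXY then ereal (\<Sum>c<N. q c * loss (xh c, yh c)) else 0)"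

lemma lessThan_N_nonempty: "{..<N} \<noteq> {}"
  using N_pos by (auto simp: lessThan_empty_iff)

lemma space_nu: "space nu = Ycal"
  using sets_eq_imp_space_eq[OF nu_sets] by (simp add: space_restrict_space)

lemma singleton_xh_sets: "c < N \<Longrightarrow> {xh c} \<in> sets MX"
  using xh_in[of c] by (auto simp: sets_restrict_space intro!: image_eqI[where x="{xh c}"])

lemma singleton_yh_sets: "c < N \<Longrightarrow> {yh c} \<in> sets MY"
  using yh_in[of c] by (auto simp: sets_restrict_space intro!: image_eqI[where x="{yh c}"])

lemma singleton_data_sets: "c < N \<Longrightarrow> {(xh c, yh c)} \<in> sets MXY"
  using pair_measureI[OF singleton_xh_sets singleton_yh_sets] by simp

lemma data_image_sets: "(\<lambda>i. (xh i, yh i)) ` {..<N} \<in> sets MXY"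
  by (rule sets.countable) (auto simp: singleton_data_sets)

lemma data_inj: "inj_on (\<lambda>i. (xh i, yh i)) {..<N}"
  using xh_inj by (auto simp: inj_on_def)

lemma data_in_space: "i < N \<Longrightarrow> (xh i, yh i) \<in> space MXY"
  using xh_in yh_in by (simp add: space_pair_measure space_restrict_space)

lemma xh_in_space: "i < N \<Longrightarrow> xh i \<in> space MX"
  using xh_in by (simp add: space_restrict_space)

lemma KL_nominal_marginal:
  assumes "prob_space QX" and "sets QX = sets MX"
  shows "KL QX PX = (if emeasure QX (space QX - xh ` {..<N}) = 0
                     then ereal (\<Sum>c<N. measure QX {xh c} * ln (measure QX {xh c} * N))
                     else \<infinity>)"
  using KL_distr_pmf_of_set[OF assms, of "{..<N}" xh] lessThan_N_nonempty
  by (simp add: xh_in_space singleton_xh_sets xh_inj)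

lemma KL_empirical:
  assumes "prob_space Q" and "sets Q = sets MXY"
  shows "KL Q P_emp = (if emeasure Q (space Q - (\<lambda>i. (xh i, yh i)) ` {..<N}) = 0
                       then ereal (\<Sum>c<N. measure Q {(xh c, yh c)} * ln (measure Q {(xh c, yh c)} * N))
                       else \<infinity>)"
  using KL_distr_pmf_of_set[OF assms, of "{..<N}" "\<lambda>i. (xh i, yh i)"] lessThan_N_nonempty
  by (simp add: data_in_space singleton_data_sets data_inj)

lemma
  assumes "c < N"
  shows integrable_loss_nominal: "integrable (family_measure (th c)) (\<lambda>y. loss (xh c, y))"
    and integral_loss_nominal: "(\<integral>y. loss (xh c, y) \<partial>family_measure (th c)) = loss (xh c, yh c)"
proof -
  interpret prob_space "family_measure (th c)"
    using prob_space_family_measure[OF th_Theta[OF assms]] .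
  let ?v = "lam w (xh c)"
  have loss_eq: "(\<lambda>y. loss (xh c, y)) = (\<lambda>y. Psi nu h T ?v - T y \<bullet> ?v)"
    by (simp add: ell_loss_def)
  show "integrable (family_measure (th c)) (\<lambda>y. loss (xh c, y))"
    unfolding loss_eq using integrable_T_inner[OF th_Theta[OF assms]] by simp
  show "(\<integral>y. loss (xh c, y) \<partial>family_measure (th c)) = loss (xh c, yh c)"
    unfolding loss_eq
    using integrable_T_inner[OF th_Theta[OF assms]]
          expectation_T_inner_eq_derivative[OF th_Theta[OF assms] th_grad[OF assms]]
    by (simp add: ell_loss_def prob_space[simplified])
qed

lemma integral_loss_nonmeasurable:
  assumes "sets Q = sets MXY" and "loss \<notin> borel_measurable MXY"
  shows "(\<integral>z. loss z \<partial>Q) = 0"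
  using assms borel_measurable_integrable[of Q loss]
  by (intro not_integrable_integral_eq) (auto simp: measurable_cong_sets[OF assms(1) refl])

lemma ereal_integral_loss_eq_loss_value:
  assumes "sets Q = sets MXY"
    and "loss \<in> borel_measurable MXY \<Longrightarrow> (\<integral>z. loss z \<partial>Q) = (\<Sum>c<N. q c * loss (xh c, yh c))"
  shows "ereal (\<integral>z. loss z \<partial>Q) = loss_value q"
  using assms integral_loss_nonmeasurable[OF assms(1)] by (auto simp: loss_value_def)


lemma family_measure_sets: "sets (family_measure \<theta>) = sets MY"
  using nu_sets by simp

lemma ereal_integral_loss_of_slices:
  assumes Q: "prob_space Q" and Q_sets: "sets Q = sets MXY"
    and q: "\<And>c. c < N \<Longrightarrow> 0 \<le> q c" and q_sum: "(\<Sum>c<N. q c) = 1"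
    and rect: "\<And>c A. c < N \<Longrightarrow> A \<in> sets MY \<Longrightarrow>
                 emeasure Q ({xh c} \<times> A) = ennreal (q c) * emeasure (family_measure (th c)) A"
  shows "ereal (\<integral>z. loss z \<partial>Q) = loss_value q"
proof (rule ereal_integral_loss_eq_loss_value[OF Q_sets])
  assume "loss \<in> borel_measurable MXY"
  then have "(\<integral>z. loss z \<partial>Q) = (\<Sum>c<N. q c * (\<integral>y. loss (xh c, y) \<partial>family_measure (th c)))"
    using prob_space_family_measure[OF th_Theta] family_measure_sets singleton_xh_sets
      xh_inj q q_sum rect integrable_loss_nominal
    by (intro integral_eq_sum_slices[OF Q Q_sets]) auto
  also have "\<dots> = (\<Sum>c<N. q c * loss (xh c, yh c))"
    using integral_loss_nominal by (intro sum.cong refl) simp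
  finally show "(\<integral>z. loss z \<partial>Q) = (\<Sum>c<N. q c * loss (xh c, yh c))" .
qed

lemma ereal_integral_loss_of_concentrated:
  assumes Q: "prob_space Q" and Q_sets: "sets Q = sets MXY"
    and conc: "emeasure Q (space Q - (\<lambda>i. (xh i, yh i)) ` {..<N}) = 0"
  shows "ereal (\<integral>z. loss z \<partial>Q) = loss_value (\<lambda>c. measure Q {(xh c, yh c)})"
proof (rule ereal_integral_loss_eq_loss_value[OF Q_sets])
  interpret prob_space Q by fact
  assume "loss \<in> borel_measurable MXY"
  then have loss_Q: "loss \<in> borel_measurable Q" by (simp add: measurable_cong_sets[OF Q_sets refl])
  let ?D = "(\<lambda>i. (xh i, yh i)) ` {..<N}"
  have "AE z in Q. z \<in> ?D"
    using conc data_image_sets Q_sets by (intro AE_I'[where N="space Q - ?D"]) auto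
  then have "(\<integral>z. loss z \<partial>Q) = (\<Sum>s\<in>?D. loss s * measure Q {s})"
    using loss_Q by (intro integral_finite_support) (auto simp: Q_sets singleton_data_sets)
  then show "(\<integral>z. loss z \<partial>Q) = (\<Sum>c<N. measure Q {(xh c, yh c)} * loss (xh c, yh c))"
    by (simp add: sum.reindex[OF data_inj] mult.commute)
qed

lemma KL_ball_weights:
  assumes "Q \<in> KL_ball"
  shows "\<exists>q. feasible_weights q \<and> ereal (\<integral>z. loss z \<partial>Q) = loss_value q"
proof (intro exI conjI)
  have Q: "prob_space Q" and Q_sets: "sets Q = sets MXY" and KL: "KL Q P_emp \<le> ereal eps"
    using assms by auto
  have conc: "emeasure Q (space Q - (\<lambda>i. (xh i, yh i)) ` {..<N}) = 0"
    using KL KL_empirical[OF Q Q_sets] by (auto split: if_splits)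
  show "feasible_weights (\<lambda>c. measure Q {(xh c, yh c)})"
    unfolding feasible_weights_def
    using KL KL_empirical[OF Q Q_sets] conc
      sum_measure_singletons_eq_1[OF Q _ _ data_inj conc] singleton_data_sets
    by (auto simp: Q_sets)
  show "ereal (\<integral>z. loss z \<partial>Q) = loss_value (\<lambda>c. measure Q {(xh c, yh c)})"
    by (rule ereal_integral_loss_of_concentrated[OF Q Q_sets conc])
qed


lemma amb_set_weights:
  assumes "Q \<in> ambiguity_set"
  shows "\<exists>q. feasible_weights q \<and> ereal (\<integral>z. loss z \<partial>Q) = loss_value q"
proof -
  obtain QX \<theta> where Q: "prob_space Q" and Q_sets: "sets Q = sets MXY"
    and QX: "prob_space QX" and QX_sets: "sets QX = sets MX"
    and \<theta>: "\<And>c. c < N \<Longrightarrow> \<theta> c \<in> Theta nu h T"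
    and rect: "\<And>c A. c < N \<Longrightarrow> A \<in> sets MY \<Longrightarrow>
                 emeasure Q ({xh c} \<times> A) = emeasure QX {xh c} * emeasure (family_measure (\<theta> c)) A"
    and KL_cond: "\<And>c. c < N \<Longrightarrow> KL (family_measure (\<theta> c)) (family_measure (th c)) \<le> ereal 0"
    and KL_marg: "KL QX PX + ereal (\<Sum>c<N. 0 * measure QX {xh c}) \<le> ereal eps"
    using assms unfolding amb_set_def by blast
  interpret QX: prob_space QX by fact
  have \<theta>_th: "family_measure (\<theta> c) = family_measure (th c)" if "c < N" for c
    using that KL_cond[of c] by (intro KL_nonpos_imp_eq prob_space_family_measure \<theta> th_Theta)
                                 (simp_all add: zero_ereal_def)
  have conc: "emeasure QX (space QX - xh ` {..<N}) = 0"
    using KL_marg KL_nominal_marginal[OF QX QX_sets] by (auto split: if_splits)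
  define q where "q c = measure QX {xh c}" for c
  have q_sum: "(\<Sum>c<N. q c) = 1"
    unfolding q_def using singleton_xh_sets
    by (intro sum_measure_singletons_eq_1[OF QX _ _ xh_inj conc]) (auto simp: QX_sets)
  show ?thesis
  proof (intro exI conjI)
    show "feasible_weights q"
      unfolding feasible_weights_def
      using KL_marg KL_nominal_marginal[OF QX QX_sets] conc q_sum by (simp add: q_def)
    show "ereal (\<integral>z. loss z \<partial>Q) = loss_value q"
      using rect \<theta>_th q_sum
      by (intro ereal_integral_loss_of_slices[OF Q Q_sets]) (auto simp: q_def QX.emeasure_eq_measure)
  qed
qed

lemma KL_ball_realises:
  assumes "feasible_weights q"
  shows "\<exists>Q \<in> KL_ball. ereal (\<integral>z. loss z \<partial>Q) = loss_value q"
proof -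
  obtain p where p: "set_pmf p \<subseteq> {..<N}" and pmf_p: "\<And>c. c < N \<Longrightarrow> pmf p c = q c"
    by (rule obtain_pmf_with_weights[of "{..<N}" q]) (use assms in \<open>auto simp: feasible_weights_def\<close>)
  let ?Q = "distr p MXY (\<lambda>i. (xh i, yh i))"
  have Q: "prob_space ?Q" by (rule prob_space_distr_pmf[OF p data_in_space]) simp
  have "KL ?Q P_emp = ereal (\<Sum>c<N. pmf p c * ln (pmf p c * card {..<N}))"
    by (rule KL_distr_pmf_distr_pmf_of_set[OF p]) (auto simp: data_in_space singleton_data_sets data_inj)
  then have KL: "KL ?Q P_emp \<le> ereal eps"
    using assms pmf_p by (simp add: feasible_weights_def)
  have "ereal (\<integral>z. loss z \<partial>?Q) = loss_value (\<lambda>c. measure ?Q {(xh c, yh c)})"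
    by (rule ereal_integral_loss_of_concentrated[OF Q])
       (use emeasure_distr_pmf_outside_image[of p "{..<N}" "\<lambda>i. (xh i, yh i)" MXY, OF p data_in_space]
          data_image_sets in auto)
  also have "\<dots> = loss_value q"
    using measure_distr_pmf_singleton[OF p data_in_space data_inj _ singleton_data_sets] pmf_p
    unfolding loss_value_def by (auto intro!: sum.cong)
  finally show ?thesis using Q KL by auto
qed


definition line_measure :: "nat \<Rightarrow> ('x \<times> 'y) measure" where
  "line_measure c = distr (family_measure (th c)) MXY (\<lambda>y. (xh c, y))"

text \<open>Indices \<open>c \<ge> N\<close> are redirected to \<open>0\<close> so that every component is a probability measure.\<close>

definition mixture :: "nat pmf \<Rightarrow> ('x \<times> 'y) measure" where
  "mixture p = measure_pmf p \<bind> (\<lambda>c. line_measure (if c < N then c else 0))"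

lemma measurable_line: "c < N \<Longrightarrow> (\<lambda>y. (xh c, y)) \<in> measurable (family_measure \<theta>) MXY"
  using xh_in_space
  by (subst measurable_cong_sets[OF family_measure_sets refl])
     (auto intro!: measurable_Pair measurable_const measurable_ident)

lemma prob_space_line_measure: "c < N \<Longrightarrow> prob_space (line_measure c)"
  unfolding line_measure_def
  by (intro prob_space.prob_space_distr prob_space_family_measure th_Theta measurable_line)

lemma emeasure_line_measure_rect:
  assumes "c < N" and "c' < N" and A: "A \<in> sets MY"
  shows "emeasure (line_measure c') ({xh c} \<times> A) = (if c' = c then emeasure (family_measure (th c)) A else 0)"
proof -
  have "(\<lambda>y. (xh c', y)) -` ({xh c} \<times> A) \<inter> space (family_measure (th c')) = (if c' = c then A else {})"
    using xh_inj assms sets.sets_into_space[OF A]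
    by (auto simp: inj_on_def space_nu space_restrict_space)
  moreover have "{xh c} \<times> A \<in> sets MXY" by (intro pair_measureI singleton_xh_sets assms)
  ultimately show ?thesis
    unfolding line_measure_def using measurable_line[OF \<open>c' < N\<close>] by (simp add: emeasure_distr)
qed

lemma
  assumes p: "set_pmf p \<subseteq> {..<N}"
  shows prob_space_mixture: "prob_space (mixture p)"
    and sets_mixture: "sets (mixture p) = sets MXY"
    and emeasure_mixture: "X \<in> sets MXY \<Longrightarrow> emeasure (mixture p) X = (\<Sum>c<N. pmf p c * emeasure (line_measure c) X)"
proof -
  let ?K = "\<lambda>c. line_measure (if c < N then c else 0)"
  have K: "prob_space (?K c)" and K_sets: "sets (?K c) = sets MXY" for c
    using prob_space_line_measure N_pos by (simp_all add: line_measure_def)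
  then have K_measurable: "?K \<in> measurable p (subprob_algebra MXY)"
    by (simp add: space_subprob_algebra prob_space_imp_subprob_space)
  show "prob_space (mixture p)"
    unfolding mixture_def by (rule measure_pmf.prob_space_bind[OF _ K_measurable]) (simp add: K)
  show "sets (mixture p) = sets MXY"
    unfolding mixture_def by (rule sets_bind_measurable[OF K_measurable]) simp
  assume X: "X \<in> sets MXY"
  have "emeasure (mixture p) X = (\<integral>\<^sup>+c. emeasure (?K c) X \<partial>measure_pmf p)"
    unfolding mixture_def by (rule emeasure_bind[OF _ K_measurable X]) simp
  also have "\<dots> = (\<Sum>c<N. emeasure (?K c) X * emeasure (measure_pmf p) {c})"
    by (rule nn_integral_finite_support) (use p in \<open>auto simp: AE_measure_pmf_iff\<close>)
  also have "\<dots> = (\<Sum>c<N. pmf p c * emeasure (line_measure c) X)"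
    by (intro sum.cong refl) (simp add: emeasure_pmf_single mult.commute)
  finally show "emeasure (mixture p) X = (\<Sum>c<N. pmf p c * emeasure (line_measure c) X)" .
qed

lemma emeasure_mixture_rect:
  assumes "set_pmf p \<subseteq> {..<N}" and "c < N" and "A \<in> sets MY"
  shows "emeasure (mixture p) ({xh c} \<times> A) = pmf p c * emeasure (family_measure (th c)) A"
proof -
  have "{xh c} \<times> A \<in> sets MXY" by (intro pair_measureI singleton_xh_sets assms)
  then show ?thesis
    using assms by (simp add: emeasure_mixture emeasure_line_measure_rect if_distrib cong: if_cong)
qed

lemma amb_set_realises:
  assumes "feasible_weights q"
  shows "\<exists>Q \<in> ambiguity_set. ereal (\<integral>z. loss z \<partial>Q) = loss_value q"
proof -
  obtain p where p: "set_pmf p \<subseteq> {..<N}" and pmf_p: "\<And>c. c < N \<Longrightarrow> pmf p c = q c"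
    by (rule obtain_pmf_with_weights[of "{..<N}" q]) (use assms in \<open>auto simp: feasible_weights_def\<close>)
  let ?QX = "distr p MX xh"
  have QX: "prob_space ?QX" by (rule prob_space_distr_pmf[OF p xh_in_space]) simp
  interpret QX: prob_space ?QX by (rule QX)
  have QX_point: "measure ?QX {xh c} = q c" if "c < N" for c
    using measure_distr_pmf_singleton[OF p xh_in_space xh_inj _ singleton_xh_sets] pmf_p that by simp
  have "KL ?QX PX = ereal (\<Sum>c<N. pmf p c * ln (pmf p c * card {..<N}))"
    by (rule KL_distr_pmf_distr_pmf_of_set[OF p]) (auto simp: xh_in_space singleton_xh_sets xh_inj)
  then have KL_marg: "KL ?QX PX + ereal (\<Sum>c<N. 0 * measure ?QX {xh c}) \<le> ereal eps"
    using assms pmf_p by (simp add: feasible_weights_def)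
  have rect: "emeasure (mixture p) ({xh c} \<times> A) = emeasure ?QX {xh c} * emeasure (family_measure (th c)) A"
    if "c < N" "A \<in> sets MY" for c A
    using emeasure_mixture_rect[OF p that] QX_point[OF that(1)] pmf_p[OF that(1)]
    by (simp add: QX.emeasure_eq_measure)
  have "mixture p \<in> ambiguity_set"
    unfolding amb_set_def
    using prob_space_mixture[OF p] sets_mixture[OF p] QX th_Theta rect KL_marg
      KL_self[OF prob_space_family_measure[OF th_Theta]]
    by (intro CollectI conjI exI[of _ ?QX] exI[of _ th]) auto
  moreover have "ereal (\<integral>z. loss z \<partial>mixture p) = loss_value q"
    using prob_space_mixture[OF p] sets_mixture[OF p] emeasure_mixture_rect[OF p] pmf_p assms
    by (intro ereal_integral_loss_of_slices) (auto simp: feasible_weights_def)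
  ultimately show ?thesis by blast
qed


lemma SUP_amb_set_eq_SUP_KL_ball:
  "(SUP Q \<in> ambiguity_set. ereal (\<integral>z. loss z \<partial>Q)) = (SUP Q \<in> KL_ball. ereal (\<integral>z. loss z \<partial>Q))"
proof -
  have "(\<lambda>Q. ereal (\<integral>z. loss z \<partial>Q)) ` ambiguity_set = (\<lambda>Q. ereal (\<integral>z. loss z \<partial>Q)) ` KL_ball"
  proof (rule image_eq_imageI)
    fix Q assume "Q \<in> ambiguity_set"
    then obtain q where q: "feasible_weights q" and "ereal (\<integral>z. loss z \<partial>Q) = loss_value q"
      using amb_set_weights by blast
    moreover obtain Q' where "Q' \<in> KL_ball" and "ereal (\<integral>z. loss z \<partial>Q') = loss_value q"
      using KL_ball_realises[OF q] by blast
    ultimately show "\<exists>Q'\<in>KL_ball. ereal (\<integral>z. loss z \<partial>Q) = ereal (\<integral>z. loss z \<partial>Q')"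
      by (intro bexI[where x=Q']) simp_all
  next
    fix Q assume "Q \<in> KL_ball"
    then obtain q where q: "feasible_weights q" and "ereal (\<integral>z. loss z \<partial>Q) = loss_value q"
      using KL_ball_weights by blast
    moreover obtain Q' where "Q' \<in> ambiguity_set" and "ereal (\<integral>z. loss z \<partial>Q') = loss_value q"
      using amb_set_realises[OF q] by blast
    ultimately show "\<exists>Q'\<in>ambiguity_set. ereal (\<integral>z. loss z \<partial>Q) = ereal (\<integral>z. loss z \<partial>Q')"
      by (intro bexI[where x=Q']) simp_all
  qed
  then show ?thesis by simp
qed

end

theorem proposition4p1:
  fixes nu :: "(real^'m) measure" and h :: "real^'m \<Rightarrow> real" and T :: "real^'m \<Rightarrow> real^'p"
    and Xcal :: "(real^'n) set" and Ycal :: "(real^'m) set" and Wcal :: "(real^'k) set"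
    and lam :: "real^'k \<Rightarrow> real^'n \<Rightarrow> real^'p"
    and N :: nat and xh :: "nat \<Rightarrow> real^'n" and yh :: "nat \<Rightarrow> real^'m"
    and th :: "nat \<Rightarrow> real^'p" and eps :: real
  assumes nu_sets: "sets nu = sets (restrict_space borel Ycal)"
    and h_meas: "h \<in> borel_measurable nu" and h_nonneg: "\<forall>y\<in>Ycal. 0 \<le> h y"
    and T_meas: "T \<in> borel_measurable nu"
    and regular: "regular_expfam nu h T"
    and lam_cont: "continuous_on (Wcal \<times> Xcal) (\<lambda>(w, x). lam w x)"
    and lam_Theta: "\<forall>w\<in>Wcal. \<forall>x\<in>Xcal. lam w x \<in> Theta nu h T"
    and N_pos: "N \<ge> 1"
    and xh_in: "\<forall>i<N. xh i \<in> Xcal" and yh_in: "\<forall>i<N. yh i \<in> Ycal"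
    and xh_distinct: "inj_on xh {..<N}"
    and eps_nonneg: "0 \<le> eps"
    and th_Theta: "\<forall>c<N. th c \<in> Theta nu h T"
    and th_grad: "\<forall>c<N. (Psi nu h T has_derivative (\<lambda>v. T (yh c) \<bullet> v)) (at (th c))"
  shows "\<forall>w\<in>Wcal.
     (SUP Q \<in> amb_set (restrict_space borel Xcal) (restrict_space borel Ycal) nu h T N xh
                 (distr (measure_pmf (pmf_of_set {..<N})) (restrict_space borel Xcal) xh)
                 th (\<lambda>_. 0) eps.
        ereal (\<integral>z. ell_loss nu h T lam (fst z) (snd z) w \<partial>Q))
   = (SUP Q \<in> {Q. prob_space Q
                   \<and> sets Q = sets (restrict_space borel Xcal \<Otimes>\<^sub>M restrict_space borel Ycal)
                   \<and> KL Q (distr (measure_pmf (pmf_of_set {..<N}))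
                              (restrict_space borel Xcal \<Otimes>\<^sub>M restrict_space borel Ycal)
                              (\<lambda>i. (xh i, yh i))) \<le> ereal eps}.
        ereal (\<integral>z. ell_loss nu h T lam (fst z) (snd z) w \<partial>Q))"
proof (intro ballI distinct_covariates_dro.SUP_amb_set_eq_SUP_KL_ball)
  fix w assume "w \<in> Wcal"
  have "space nu = Ycal"
    using sets_eq_imp_space_eq[OF nu_sets] by (simp add: space_restrict_space)
  then show "distinct_covariates_dro nu h T Xcal Ycal lam N xh yh th w"
    using assms \<open>w \<in> Wcal\<close> by unfold_locales auto
qed

end
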